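(* For every choice of the distributions $P(\cdot\mid x)$, every choice of regressors $r_{v,i}:X\to[0,1]$ ($v$ internal, $2\le i\le k$), and every pair $(x,y)\in X\times Y$, $$\bigl(Q(y\mid x)-P(y\mid x)\bigr)^2\;\le\;4\,m^2\Bigl(\frac{k-1}{k}\Bigr)^2\varepsilon^2,\qquad m=\log_k n,$$ where $\varepsilon^2=\frac{1}{(k-1)m}\sum_{v\in\mathrm{path}(y)}\sum_{i=2}^{k}\bigl(r_{v,i}(x)-P_v(Y_{v,i}\mid x)\bigr)^2$ is the average squared error of the $(k-1)m$ non-trivial regressors at the nodes on the path to $y$.
   Context: Let $X$ be an arbitrary set and $Y=\{1,\dots,n\}$. For each $x\in X$, $P(\cdot\mid x)$ is a probability distribution on $Y$; for $S\subseteq Y$ write $P(S\mid x)=\sum_{y\in S}P(y\mid x)$. The $0/1$ matrices $C_{2^t}$ are defined recursively by $C_2=\begin{bmatrix}1&1\\1&0\end{bmatrix}$ and $C_{2s}=\begin{bmatrix}C_s&C_s\\ C_s&J-C_s\end{bmatrix}$, where $J$ is the all-ones $s\times s$ matrix; row $1$ of each $C_{2^t}$ is all ones. Let $k\ge 2$ be a power of $2$ and $n=k^m$ for an integer $m\ge1$. Fix a complete $k$-ary rooted tree of depth $m$ whose $n$ leaves are in one-to-one correspondence with $Y$; each internal node $v$ has children $c_1,\dots,c_k$, and $T(u)\subseteq Y$ denotes the set of labels in the subtree rooted at $u$. For a label $y$, $\mathrm{path}(y)$ is the set of internal nodes on the root-to-$y$ path, and for $v\in\mathrm{path}(y)$,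 $j_v(y)$ is the index of the child of $v$ whose subtree contains $y$. For internal $v$, $P_v(c_j\mid x)=P(T(c_j)\mid x)/P(T(v)\mid x)$ when $P(T(v)\mid x)>0$ (an arbitrary probability distribution on the children otherwise), and for a set $S$ of children $P_v(S\mid x)=\sum_{c\in S}P_v(c\mid x)$. For $i\in\{1,\dots,k\}$, $Y_{v,i}=\{c_j: C_k(i,j)=1\}$. At each internal node $v$ there are $k-1$ regressors $r_{v,i}:X\to[0,1]$, $i=2,\dots,k$, and we set $r_{v,1}\equiv1$. The node estimate is $Q_v(c_j\mid x)=2\cdot\frac1k\sum_{i=1}^k\bigl[C_k(i,j)r_{v,i}(x)+(1-C_k(i,j))(1-r_{v,i}(x))\bigr]-1$, and the overall estimate is $Q(y\mid x)=\prod_{v\in\mathrm{path}(y)}Q_v(c_{j_v(y)}\mid x)$. *)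

theory Defs
  imports Complex_Main
begin

text \<open>Conventions: all matrix/child indices are 0-based.  Cmat t is the
  2^t x 2^t matrix C_{2^t}; the paper's C_k(i,j) (1-based) is Cmat t (i-1) (j-1).
  Row 0 is the all-ones row.\<close>

fun Cmat :: "nat \<Rightarrow> nat \<Rightarrow> nat \<Rightarrow> real" where
  "Cmat 0 i j = 1"
| "Cmat (Suc t) i j = (let s = 2 ^ t in
      if i < s then (if j < s then Cmat t i j else Cmat t i (j - s))
      else (if j < s then Cmat t (i - s) j else 1 - Cmat t (i - s) (j - s)))"

text \<open>Complete k-ary tree of depth m: nodes are lists of child indices (< k)
  of length at most m; node u has children u @ [j], j < k.\<close>

definition leaves :: "nat \<Rightarrow> nat \<Rightarrow> nat list set" where
  "leaves k m = {u. length u = m \<and> (\<forall>c\<in>set u. c < k)}"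

definition internal_nodes :: "nat \<Rightarrow> nat \<Rightarrow> nat list set" where
  "internal_nodes k m = {u. length u < m \<and> (\<forall>c\<in>set u. c < k)}"

definition subtree_labels :: "nat \<Rightarrow> nat \<Rightarrow> (nat list \<Rightarrow> nat) \<Rightarrow> nat list \<Rightarrow> nat set" where
  "subtree_labels k m lab u = lab ` {w \<in> leaves k m. take (length u) w = u}"

definition leaf_of :: "nat \<Rightarrow> nat \<Rightarrow> (nat list \<Rightarrow> nat) \<Rightarrow> nat \<Rightarrow> nat list" where
  "leaf_of k m lab y = inv_into (leaves k m) lab y"

definition path_nodes :: "nat \<Rightarrow> nat \<Rightarrow> (nat list \<Rightarrow> nat) \<Rightarrow> nat \<Rightarrow> nat list set" where
  "path_nodes k m lab y = (\<lambda>d. take d (leaf_of k m lab y)) ` {..<m}"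

definition child_idx :: "nat \<Rightarrow> nat \<Rightarrow> (nat list \<Rightarrow> nat) \<Rightarrow> nat \<Rightarrow> nat list \<Rightarrow> nat" where
  "child_idx k m lab y v = leaf_of k m lab y ! length v"

definition massP :: "('x \<Rightarrow> nat \<Rightarrow> real) \<Rightarrow> 'x \<Rightarrow> nat set \<Rightarrow> real" where
  "massP P x S = (\<Sum>y\<in>S. P x y)"

text \<open>P_v(c_j|x); D x v is the arbitrary distribution on the children of v
  used when P(T(v)|x) = 0.\<close>
definition node_cond :: "nat \<Rightarrow> nat \<Rightarrow> (nat list \<Rightarrow> nat) \<Rightarrow> ('x \<Rightarrow> nat \<Rightarrow> real)
    \<Rightarrow> ('x \<Rightarrow> nat list \<Rightarrow> nat \<Rightarrow> real) \<Rightarrow> 'x \<Rightarrow> nat list \<Rightarrow> nat \<Rightarrow> real" where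
  "node_cond k m lab P D x v j =
     (if massP P x (subtree_labels k m lab v) > 0
      then massP P x (subtree_labels k m lab (v @ [j])) / massP P x (subtree_labels k m lab v)
      else D x v j)"

definition node_cond_set :: "nat \<Rightarrow> nat \<Rightarrow> (nat list \<Rightarrow> nat) \<Rightarrow> ('x \<Rightarrow> nat \<Rightarrow> real)
    \<Rightarrow> ('x \<Rightarrow> nat list \<Rightarrow> nat \<Rightarrow> real) \<Rightarrow> 'x \<Rightarrow> nat list \<Rightarrow> nat set \<Rightarrow> real" where
  "node_cond_set k m lab P D x v S = (\<Sum>j\<in>S. node_cond k m lab P D x v j)"

definition Yset :: "nat \<Rightarrow> nat \<Rightarrow> nat set" where
  "Yset t i = {j. j < 2 ^ t \<and> Cmat t i j = 1}"

text \<open>Regressors with r_{v,1} = 1 (0-based: row 0).\<close>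
definition reg :: "(nat list \<Rightarrow> nat \<Rightarrow> 'x \<Rightarrow> real) \<Rightarrow> nat list \<Rightarrow> nat \<Rightarrow> 'x \<Rightarrow> real" where
  "reg r v i x = (if i = 0 then 1 else r v i x)"

definition node_est :: "nat \<Rightarrow> (nat list \<Rightarrow> nat \<Rightarrow> 'x \<Rightarrow> real) \<Rightarrow> 'x \<Rightarrow> nat list \<Rightarrow> nat \<Rightarrow> real" where
  "node_est t r x v j =
     2 * (1 / real (2 ^ t)) * (\<Sum>i<2 ^ t. Cmat t i j * reg r v i x
                                   + (1 - Cmat t i j) * (1 - reg r v i x)) - 1"

definition est :: "nat \<Rightarrow> nat \<Rightarrow> (nat list \<Rightarrow> nat) \<Rightarrow> (nat list \<Rightarrow> nat \<Rightarrow> 'x \<Rightarrow> real)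
    \<Rightarrow> 'x \<Rightarrow> nat \<Rightarrow> real" where
  "est t m lab r x y =
     (\<Prod>v\<in>path_nodes (2 ^ t) m lab y. node_est t r x v (child_idx (2 ^ t) m lab y v))"

definition eps_sq :: "nat \<Rightarrow> nat \<Rightarrow> (nat list \<Rightarrow> nat) \<Rightarrow> ('x \<Rightarrow> nat \<Rightarrow> real)
    \<Rightarrow> ('x \<Rightarrow> nat list \<Rightarrow> nat \<Rightarrow> real) \<Rightarrow> (nat list \<Rightarrow> nat \<Rightarrow> 'x \<Rightarrow> real) \<Rightarrow> 'x \<Rightarrow> nat \<Rightarrow> real" where
  "eps_sq t m lab P D r x y =
     1 / (real (2 ^ t - 1) * real m) *
     (\<Sum>v\<in>path_nodes (2 ^ t) m lab y. \<Sum>i\<in>{1..<2 ^ t}.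
        (r v i x - node_cond_set (2 ^ t) m lab P D x v (Yset t i)) ^ 2)"

end

theory Submission
  imports Defs "HOL-Analysis.Convex"
begin

(* Write k = 2^t and H = 2 C_k - J, the +-1 Sylvester-Hadamard matrix;
   its columns are pairwise orthogonal, H^T H = k I.  The node estimate is the linear
   decoder Q_v(c_j) = (1/k) sum_i H(i,j) (2 a_i - 1) applied to the regression vector
   a = (r_{v,i}); applied to the exact targets p_i = P_v(Y_{v,i}) it returns P_v(c_j)
   exactly (orthogonality, plus p_1 = 1 for the all-ones first row).  Hence Q_v(c_j) - P_v(c_j) = (2/k) times a
   +-1 combination of the k-1 non-trivial errors r_{v,i} - p_i, and Cauchy-Schwarz gives
   (Q_v - P_v)^2 <= 4(k-1)/k^2 * E_v, with E_v the squared error at v.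
   On the tree side, P(y|x) is the product of the P_v(c_{j_v(y)}) along path(y) (chain
   rule for subtree masses), and all factors lie in [-1,1].  So |Q - P| is at most the
   sum of the node errors over the m path nodes, and a second Cauchy-Schwarz step over
   the path gives (Q - P)^2 <= m * 4(k-1)/k^2 * sum_v E_v, which is the claimed bound. *)

subsection \<open>The Sylvester-Hadamard matrix\<close>

lemma Cmat_01: "Cmat t i j = 0 \<or> Cmat t i j = 1"
  by (induction t arbitrary: i j) (auto simp: Let_def)

lemma Cmat_row0: "Cmat t 0 j = 1"
  by (induction t arbitrary: j) (auto simp: Let_def)

definition hadamard :: "nat \<Rightarrow> nat \<Rightarrow> nat \<Rightarrow> real" where
  "hadamard t i j = 2 * Cmat t i j - 1"

lemma hadamard_abs: "\<bar>hadamard t i j\<bar> = 1"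
  using Cmat_01[of t i j] by (auto simp: hadamard_def)

lemma hadamard_Suc_upper:
  "i < 2^t \<Longrightarrow> hadamard (Suc t) i j = hadamard t i (if j < 2^t then j else j - 2^t)"
  by (simp add: hadamard_def Let_def)

lemma hadamard_Suc_lower:
  "hadamard (Suc t) (2^t + i) j = (if j < 2^t then hadamard t i j else - hadamard t i (j - 2^t))"
  by (simp add: hadamard_def Let_def)

lemma sum_lessThan_add:
  "(\<Sum>i<a + (b::nat). f i) = (\<Sum>i<a. f i) + (\<Sum>i<b. f (a + i) :: 'a :: comm_monoid_add)"
  by (induction b) (auto simp: add_ac)

lemma hadamard_orthogonal:
  assumes "j < 2^t" and "j' < 2^t"
  shows "(\<Sum>i<2^t. hadamard t i j * hadamard t i j') = (if j = j' then 2^t else 0)"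
  using assms
proof (induction t arbitrary: j j')
  case 0
  then show ?case by (simp add: hadamard_def)
next
  case (Suc t)
  let ?s = "2^t :: nat"
  define red where "red l = (if l < ?s then l else l - ?s)" for l
  define sign where "sign l = (if l < ?s then 1 else - 1 :: real)" for l
  have IH: "(\<Sum>i<?s. hadamard t i (red j) * hadamard t i (red j'))
              = (if red j = red j' then 2^t else 0)"
    using Suc.prems by (intro Suc.IH) (auto simp: red_def)
  have upper: "(\<Sum>i<?s. hadamard (Suc t) i j * hadamard (Suc t) i j')
      = (\<Sum>i<?s. hadamard t i (red j) * hadamard t i (red j'))"
    by (rule sum.cong) (auto simp: hadamard_Suc_upper red_def)
  have lower: "(\<Sum>i<?s. hadamard (Suc t) (?s + i) j * hadamard (Suc t) (?s + i) j')
      = sign j * sign j' * (\<Sum>i<?s. hadamard t i (red j) * hadamard t i (red j'))"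
    unfolding sum_distrib_left
    by (rule sum.cong) (auto simp: hadamard_Suc_lower red_def sign_def)
  have "(\<Sum>i<2^Suc t. hadamard (Suc t) i j * hadamard (Suc t) i j')
      = (\<Sum>i<?s. hadamard (Suc t) i j * hadamard (Suc t) i j')
        + (\<Sum>i<?s. hadamard (Suc t) (?s + i) j * hadamard (Suc t) (?s + i) j')"
    using sum_lessThan_add[of _ ?s ?s] by (simp add: mult_2)
  also have "\<dots> = (1 + sign j * sign j') * (if red j = red j' then 2^t else 0)"
    unfolding upper lower IH by (simp add: algebra_simps)
  also have "\<dots> = (if j = j' then 2^Suc t else 0)"
    using Suc.prems by (auto simp: red_def sign_def)
  finally show ?case .
qed

subsection \<open>The node decoder\<close>

text \<open>The node estimate as a function of a regression vector a (indexed by the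
  rows of C); a i should approximate the probability of the child set of row i.\<close>
definition decode :: "nat \<Rightarrow> (nat \<Rightarrow> real) \<Rightarrow> nat \<Rightarrow> real" where
  "decode t a j =
     2 * (1 / real (2 ^ t)) * (\<Sum>i<2 ^ t. Cmat t i j * a i + (1 - Cmat t i j) * (1 - a i)) - 1"

definition set_probs :: "nat \<Rightarrow> (nat \<Rightarrow> real) \<Rightarrow> nat \<Rightarrow> real" where
  "set_probs t q i = (\<Sum>j<2 ^ t. Cmat t i j * q j)"

lemma node_est_decode: "node_est t r x v j = decode t (\<lambda>i. reg r v i x) j"
  by (simp add: node_est_def decode_def)

lemma sum_Yset: "(\<Sum>j\<in>Yset t i. q j) = set_probs t q i"
proof -
  have "(\<Sum>j\<in>Yset t i. q j) = (\<Sum>j<2 ^ t. if Cmat t i j = 1 then q j else 0)"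
    unfolding Yset_def by (subst sum.inter_filter[symmetric]) (auto intro: sum.cong)
  also have "\<dots> = set_probs t q i"
    unfolding set_probs_def by (rule sum.cong) (use Cmat_01[of t i] in auto)
  finally show ?thesis .
qed

lemma decode_hadamard: "decode t a j = (\<Sum>i<2^t. hadamard t i j * (2 * a i - 1)) / 2^t"
proof -
  let ?S = "\<Sum>i<2^t. hadamard t i j * (2 * a i - 1)"
  have "(\<Sum>i<2^t. Cmat t i j * a i + (1 - Cmat t i j) * (1 - a i))
      = (\<Sum>i<2^t. 1/2 + hadamard t i j * (2 * a i - 1) / 2)"
    by (rule sum.cong) (simp_all add: hadamard_def field_simps)
  also have "\<dots> = 2^t / 2 + ?S / 2"
    by (simp add: sum.distrib sum_divide_distrib)
  finally show ?thesis
    by (simp add: decode_def field_simps)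
qed

lemma decode_diff:
  "decode t a j - decode t b j = 2 / 2^t * (\<Sum>i<2^t. hadamard t i j * (a i - b i))"
  unfolding decode_hadamard
  by (simp add: sum_distrib_left sum_divide_distrib diff_divide_distrib[symmetric]
      sum_subtractf[symmetric] algebra_simps)

text \<open>Decoding the exact targets recovers the distribution (orthogonality of H).\<close>
lemma decode_set_probs:
  assumes j: "j < 2^t" and q: "(\<Sum>j<2^t. q j) = 1"
  shows "decode t (set_probs t q) j = q j"
proof -
  have target: "2 * set_probs t q i - 1 = (\<Sum>j'<2^t. hadamard t i j' * q j')" for i
    unfolding set_probs_def hadamard_def
    by (simp add: algebra_simps sum_subtractf sum_distrib_left q)
  have "(\<Sum>i<2^t. hadamard t i j * (2 * set_probs t q i - 1))
      = (\<Sum>j'<2^t. q j' * (\<Sum>i<2^t. hadamard t i j * hadamard t i j'))"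
    unfolding target sum_distrib_left by (subst sum.swap) (simp add: mult_ac)
  also have "\<dots> = (\<Sum>j'<2^t. q j' * (if j = j' then 2^t else 0))"
    using j by (intro sum.cong) (simp_all add: hadamard_orthogonal)
  also have "\<dots> = q j * 2^t"
    using j by (simp add: if_distrib cong: if_cong)
  finally show ?thesis by (simp add: decode_hadamard)
qed

lemma decode_bounded:
  assumes "\<And>i. i < 2^t \<Longrightarrow> 0 \<le> a i \<and> a i \<le> 1"
  shows "\<bar>decode t a j\<bar> \<le> 1"
proof -
  have "\<bar>\<Sum>i<2^t. hadamard t i j * (2 * a i - 1)\<bar> \<le> (\<Sum>i<(2::nat)^t. 1)"
    using assms by (intro order_trans[OF sum_abs] sum_mono)
      (force simp: abs_mult hadamard_abs)
  then show ?thesis by (simp add: decode_hadamard)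
qed

text \<open>The error of the decoded value at one node in terms of the regression errors of
  the non-trivial rows (row 0 is exact since both a 0 and the target equal 1).\<close>
lemma decode_error_sq:
  assumes j: "j < 2^t" and q: "(\<Sum>j<2^t. q j) = 1" and a0: "a 0 = 1"
  shows "(decode t a j - q j)^2
           \<le> 4 * (2^t - 1) / (2^t)^2 * (\<Sum>i\<in>{1..<2^t}. (a i - set_probs t q i)^2)"
proof -
  let ?e = "\<lambda>i. a i - set_probs t q i"
  have e0: "?e 0 = 0" using a0 q by (simp add: set_probs_def Cmat_row0)
  have "decode t a j - q j = 2 / 2^t * (\<Sum>i<2^t. hadamard t i j * ?e i)"
    using decode_diff[of t a j "set_probs t q"] decode_set_probs[OF j q] by simp
  also have "(\<Sum>i<2^t. hadamard t i j * ?e i) = (\<Sum>i\<in>{1..<2^t}. hadamard t i j * ?e i)"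
    using e0 by (simp add: atLeast0LessThan[symmetric] sum.atLeast_Suc_lessThan)
  finally have diff: "decode t a j - q j = 2 / 2^t * (\<Sum>i\<in>{1..<2^t}. hadamard t i j * ?e i)" .
  have "(\<Sum>i\<in>{1..<2^t}. hadamard t i j * ?e i)^2
      \<le> (\<Sum>i\<in>{1..<2^t}. (hadamard t i j)^2) * (\<Sum>i\<in>{1..<2^t}. (?e i)^2)"
    by (rule Cauchy_Schwarz_ineq_sum)
  also have "(\<Sum>i\<in>{1..<2^t}. (hadamard t i j)^2) = 2^t - 1"
  proof -
    have "(hadamard t i j)^2 = 1" for i
      by (metis hadamard_abs power2_abs power_one)
    then show ?thesis by simp
  qed
  finally show ?thesis
    unfolding diff power_mult_distrib by (simp add: field_simps)
qed

subsection \<open>The labelled tree\<close>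

locale labelled_tree =
  fixes k m n :: nat and lab :: "nat list \<Rightarrow> nat"
  assumes lab_bij: "bij_betw lab (leaves k m) {1..n}"
begin

lemma lab_inj: "inj_on lab (leaves k m)"
  using lab_bij by (simp add: bij_betw_def)

lemma lab_image: "lab ` leaves k m = {1..n}"
  using lab_bij by (simp add: bij_betw_def)

lemma finite_leaves: "finite (leaves k m)"
  using lab_inj lab_image by (metis finite_atLeastAtMost finite_imageD)

lemma leaf_of_leaf:
  assumes "y \<in> {1..n}"
  shows "leaf_of k m lab y \<in> leaves k m" and "lab (leaf_of k m lab y) = y"
  using assms lab_image unfolding leaf_of_def by (auto intro: inv_into_into f_inv_into_f)

lemma inj_on_prefixes:
  assumes "length w = m"
  shows "inj_on (\<lambda>d. take d w) {..<m}"
proof (rule inj_onI)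
  fix a b assume ab: "a \<in> {..<m}" "b \<in> {..<m}" and "take a w = take b w"
  then have "length (take a w) = length (take b w)" by simp
  with ab assms show "a = b" by simp
qed

lemma card_path_nodes: "y \<in> {1..n} \<Longrightarrow> card (path_nodes k m lab y) = m"
  unfolding path_nodes_def using leaf_of_leaf(1)[of y]
  by (simp add: card_image inj_on_prefixes leaves_def)

lemma path_node_internal:
  "y \<in> {1..n} \<Longrightarrow> v \<in> path_nodes k m lab y \<Longrightarrow> v \<in> internal_nodes k m"
  unfolding path_nodes_def using leaf_of_leaf(1)[of y]
  by (auto simp: leaves_def internal_nodes_def dest: in_set_takeD)

lemma child_idx_less:
  "y \<in> {1..n} \<Longrightarrow> v \<in> path_nodes k m lab y \<Longrightarrow> child_idx k m lab y v < k"
  unfolding path_nodes_def child_idx_def using leaf_of_leaf(1)[of y]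
  by (auto simp: leaves_def)

lemma prod_path_nodes:
  assumes "y \<in> {1..n}"
  defines "w \<equiv> leaf_of k m lab y"
  shows "(\<Prod>v\<in>path_nodes k m lab y. f v (child_idx k m lab y v)) = (\<Prod>d<m. f (take d w) (w ! d))"
proof -
  have len: "length w = m" using leaf_of_leaf(1)[OF assms(1)] by (simp add: w_def leaves_def)
  show ?thesis
    unfolding path_nodes_def w_def[symmetric] using len
    by (simp add: prod.reindex inj_on_prefixes child_idx_def w_def[symmetric])
qed

end

locale tree_model = labelled_tree k m n lab
  for k m n :: nat and lab :: "nat list \<Rightarrow> nat" +
  fixes P :: "'x \<Rightarrow> nat \<Rightarrow> real" and D :: "'x \<Rightarrow> nat list \<Rightarrow> nat \<Rightarrow> real"
  assumes P_nonneg: "y \<in> {1..n} \<Longrightarrow> 0 \<le> P x y"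
    and P_total: "(\<Sum>y\<in>{1..n}. P x y) = 1"
    and D_nonneg: "v \<in> internal_nodes k m \<Longrightarrow> j < k \<Longrightarrow> 0 \<le> D x v j"
    and D_total: "v \<in> internal_nodes k m \<Longrightarrow> (\<Sum>j<k. D x v j) = 1"
begin

abbreviation mass :: "'x \<Rightarrow> nat list \<Rightarrow> real" where
  "mass x v \<equiv> massP P x (subtree_labels k m lab v)"

lemma mass_eq_sum:
  "mass x v = (\<Sum>w\<in>{w \<in> leaves k m. take (length v) w = v}. P x (lab w))"
  unfolding massP_def subtree_labels_def
  by (rule sum.reindex[unfolded comp_def]) (auto intro: inj_on_subset[OF lab_inj])

lemma mass_nonneg: "0 \<le> mass x v"
  unfolding mass_eq_sum by (intro sum_nonneg P_nonneg) (use lab_image in blast)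

lemma mass_root: "mass x [] = 1"
  using P_total lab_image by (simp add: massP_def subtree_labels_def)

lemma mass_leaf: "w \<in> leaves k m \<Longrightarrow> mass x w = P x (lab w)"
proof -
  assume w: "w \<in> leaves k m"
  then have "{u \<in> leaves k m. take (length w) u = w} = {w}"
    by (auto simp: leaves_def)
  then show ?thesis by (simp add: mass_eq_sum)
qed

lemma mass_children:
  assumes lv: "length v < m"
  shows "(\<Sum>j<k. mass x (v @ [j])) = mass x v"
proof -
  define A where "A = {w \<in> leaves k m. take (length v) w = v}"
  have child: "{w \<in> leaves k m. take (length (v @ [j])) w = v @ [j]} = {w \<in> A. w ! length v = j}" for j
  proof -
    have "take (Suc (length v)) w = take (length v) w @ [w ! length v]" if "w \<in> leaves k m" for w
      using that lv by (intro take_Suc_conv_app_nth) (simp add: leaves_def)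
    then show ?thesis unfolding A_def by auto
  qed
  have fin: "finite A" unfolding A_def using finite_leaves by simp
  have idx: "(\<lambda>w. w ! length v) ` A \<subseteq> {..<k}"
    using lv by (auto simp: A_def leaves_def)
  have "(\<Sum>j<k. mass x (v @ [j])) = (\<Sum>j<k. \<Sum>w\<in>{w \<in> A. w ! length v = j}. P x (lab w))"
    unfolding mass_eq_sum child ..
  also have "\<dots> = (\<Sum>w\<in>A. P x (lab w))"
    by (rule sum.group[OF fin _ idx]) simp
  finally show ?thesis by (simp add: mass_eq_sum A_def)
qed

lemma mass_child_le: "length v < m \<Longrightarrow> j < k \<Longrightarrow> mass x (v @ [j]) \<le> mass x v"
proof -
  assume "length v < m" and "j < k"
  then have "mass x (v @ [j]) \<le> (\<Sum>j'<k. mass x (v @ [j']))"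
    by (intro member_le_sum mass_nonneg) auto
  then show ?thesis using mass_children[OF \<open>length v < m\<close>] by simp
qed

lemma node_cond_nonneg:
  "v \<in> internal_nodes k m \<Longrightarrow> j < k \<Longrightarrow> 0 \<le> node_cond k m lab P D x v j"
  unfolding node_cond_def using mass_nonneg D_nonneg by simp

lemma node_cond_total:
  assumes v: "v \<in> internal_nodes k m"
  shows "(\<Sum>j<k. node_cond k m lab P D x v j) = 1"
proof (cases "mass x v > 0")
  case True
  then show ?thesis
    using mass_children[of v x] v
    by (simp add: node_cond_def sum_divide_distrib[symmetric] internal_nodes_def)
next
  case False
  then show ?thesis using D_total[OF v] by (simp add: node_cond_def)
qed

lemma node_cond_le_one:
  "v \<in> internal_nodes k m \<Longrightarrow> j < k \<Longrightarrow> node_cond k m lab P D x v j \<le> 1"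
proof -
  assume v: "v \<in> internal_nodes k m" and j: "j < k"
  have "node_cond k m lab P D x v j \<le> (\<Sum>j'<k. node_cond k m lab P D x v j')"
    using v j by (intro member_le_sum node_cond_nonneg) auto
  then show ?thesis using node_cond_total[OF v] by simp
qed

text \<open>Chain rule: the mass of a prefix of a leaf is the product of the node conditionals
  along the way (when a mass vanishes, so does every mass below it).\<close>
lemma mass_prefix_chain:
  assumes w: "w \<in> leaves k m" and "d \<le> m"
  shows "mass x (take d w) = (\<Prod>e<d. node_cond k m lab P D x (take e w) (w ! e))"
  using assms(2)
proof (induction d)
  case 0
  then show ?case using mass_root by simp
next
  case (Suc d)
  have wd: "length w = m" "w ! d < k" using w Suc.prems by (auto simp: leaves_def)
  have step: "take (Suc d) w = take d w @ [w ! d]"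
    using Suc.prems wd by (simp add: take_Suc_conv_app_nth)
  have "mass x (take (Suc d) w) = mass x (take d w) * node_cond k m lab P D x (take d w) (w ! d)"
  proof (cases "mass x (take d w) > 0")
    case True
    then show ?thesis by (simp add: node_cond_def step)
  next
    case False
    then have "mass x (take d w) = 0" using mass_nonneg[of x "take d w"] by simp
    moreover have "mass x (take (Suc d) w) \<le> mass x (take d w)"
      unfolding step using Suc.prems wd by (intro mass_child_le) auto
    ultimately show ?thesis using mass_nonneg[of x "take (Suc d) w"] by simp
  qed
  then show ?case using Suc by simp
qed

lemma P_path_product:
  assumes "y \<in> {1..n}"
  shows "P x y = (\<Prod>v\<in>path_nodes k m lab y. node_cond k m lab P D x v (child_idx k m lab y v))"
proof -
  let ?w = "leaf_of k m lab y"
  have w: "?w \<in> leaves k m" "lab ?w = y" using leaf_of_leaf[OF assms] by auto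
  then have "P x y = mass x (take m ?w)" by (simp add: mass_leaf leaves_def)
  also have "\<dots> = (\<Prod>d<m. node_cond k m lab P D x (take d ?w) (?w ! d))"
    using w by (intro mass_prefix_chain) auto
  finally show ?thesis by (simp add: prod_path_nodes[OF assms])
qed

subsection \<open>Estimation error along a path\<close>

lemma node_error_on_path:
  assumes k: "k = 2^t" and y: "y \<in> {1..n}" and v: "v \<in> path_nodes k m lab y"
  defines "c \<equiv> child_idx k m lab y v"
  shows "(node_est t r x v c - node_cond k m lab P D x v c)^2
           \<le> 4 * (real k - 1) / (real k)^2
              * (\<Sum>i\<in>{1..<k}. (r v i x - node_cond_set k m lab P D x v (Yset t i))^2)"
proof -
  let ?q = "node_cond k m lab P D x v"
  have int: "v \<in> internal_nodes k m" using path_node_internal[OF y v] .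
  have c: "c < 2^t" using child_idx_less[OF y v] k by (simp add: c_def)
  have q: "(\<Sum>j<2^t. ?q j) = 1" using node_cond_total[OF int] k by simp
  have targets: "node_cond_set k m lab P D x v (Yset t i) = set_probs t ?q i" for i
    by (simp add: node_cond_set_def sum_Yset)
  have "(decode t (\<lambda>i. reg r v i x) c - ?q c)^2
      \<le> 4 * (2^t - 1) / (2^t)^2 * (\<Sum>i\<in>{1..<2^t}. (reg r v i x - set_probs t ?q i)^2)"
    by (rule decode_error_sq[OF c q]) (simp add: reg_def)
  also have "(\<Sum>i\<in>{1..<2^t}. (reg r v i x - set_probs t ?q i)^2)
      = (\<Sum>i\<in>{1..<k}. (r v i x - node_cond_set k m lab P D x v (Yset t i))^2)"
    using k by (intro sum.cong) (simp_all add: reg_def targets[unfolded k])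
  finally show ?thesis using k by (simp add: node_est_decode)
qed

text \<open>Since all node factors lie in [-1,1], the error of the product estimate is at most
  the sum of the node errors along the path.\<close>
lemma est_error_le_node_errors:
  assumes k: "k = 2^t" and y: "y \<in> {1..n}"
    and r_range: "\<And>v i. v \<in> internal_nodes k m \<Longrightarrow> i \<in> {1..<k} \<Longrightarrow> 0 \<le> r v i x \<and> r v i x \<le> 1"
  shows "\<bar>est t m lab r x y - P x y\<bar>
           \<le> (\<Sum>v\<in>path_nodes k m lab y. \<bar>node_est t r x v (child_idx k m lab y v)
                                         - node_cond k m lab P D x v (child_idx k m lab y v)\<bar>)"
proof -
  let ?c = "child_idx k m lab y"
  have est_bound: "\<bar>node_est t r x v (?c v)\<bar> \<le> 1" if v: "v \<in> path_nodes k m lab y" for v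
    unfolding node_est_decode
    using path_node_internal[OF y v] r_range k by (intro decode_bounded) (simp add: reg_def)
  have cond_bound: "\<bar>node_cond k m lab P D x v (?c v)\<bar> \<le> 1" if v: "v \<in> path_nodes k m lab y" for v
    using node_cond_nonneg node_cond_le_one path_node_internal[OF y v] child_idx_less[OF y v] by simp
  have "est t m lab r x y = (\<Prod>v\<in>path_nodes k m lab y. node_est t r x v (?c v))"
    using k by (simp add: est_def)
  then show ?thesis
    using norm_prod_diff[of "path_nodes k m lab y" "\<lambda>v. node_est t r x v (?c v)"
        "\<lambda>v. node_cond k m lab P D x v (?c v)"] est_bound cond_bound
    by (simp add: P_path_product[OF y])
qed

end

theorem theorem2:
  fixes t m k n :: nat
    and lab :: "nat list \<Rightarrow> nat"
    and P :: "'x \<Rightarrow> nat \<Rightarrow> real"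
    and D :: "'x \<Rightarrow> nat list \<Rightarrow> nat \<Rightarrow> real"
    and r :: "nat list \<Rightarrow> nat \<Rightarrow> 'x \<Rightarrow> real"
    and x :: 'x and y :: nat
  assumes "t \<ge> 1" and "k = 2 ^ t" and "m \<ge> 1" and "n = k ^ m"
    and "bij_betw lab (leaves k m) {1..n}"
    and "\<forall>x. (\<forall>y\<in>{1..n}. P x y \<ge> 0) \<and> (\<Sum>y\<in>{1..n}. P x y) = 1"
    and "\<forall>x. \<forall>v\<in>internal_nodes k m. (\<forall>j<k. D x v j \<ge> 0) \<and> (\<Sum>j<k. D x v j) = 1"
    and "\<forall>v\<in>internal_nodes k m. \<forall>i\<in>{1..<k}. \<forall>x. 0 \<le> r v i x \<and> r v i x \<le> 1"
    and "y \<in> {1..n}"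
  shows "(est t m lab r x y - P x y) ^ 2
           \<le> 4 * (real m) ^ 2 * ((real k - 1) / real k) ^ 2 * eps_sq t m lab P D r x y"
proof -
  note k = assms(2) and y = assms(9)
  interpret tree_model k m n lab P D
    using assms(5-7) by unfold_locales auto
  let ?path = "path_nodes k m lab y" and ?c = "child_idx k m lab y"
  define err where "err v = node_est t r x v (?c v) - node_cond k m lab P D x v (?c v)" for v
  define E where "E v = (\<Sum>i\<in>{1..<k}. (r v i x - node_cond_set k m lab P D x v (Yset t i))^2)" for v
  have k2: "2 \<le> real k" using assms(1) k by (simp add: self_le_power)
  have "\<bar>est t m lab r x y - P x y\<bar> \<le> (\<Sum>v\<in>?path. \<bar>err v\<bar>)"
    using est_error_le_node_errors[OF k y, of r x] assms(8) unfolding err_def by simp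
  then have "(est t m lab r x y - P x y)^2 \<le> (\<Sum>v\<in>?path. \<bar>err v\<bar>)^2"
    by (metis power2_abs power_mono abs_ge_zero)
  also have "\<dots> \<le> (\<Sum>v\<in>?path. (err v)^2) * m"
    using sum_squared_le_sum_of_squares[of "\<lambda>v. \<bar>err v\<bar>" ?path] card_path_nodes[OF y] by simp
  also have "\<dots> \<le> (\<Sum>v\<in>?path. 4 * (real k - 1) / (real k)^2 * E v) * m"
    unfolding err_def E_def
    by (intro mult_right_mono sum_mono node_error_on_path[OF k y]) simp_all
  also have "\<dots> = 4 * (real k - 1) / (real k)^2 * (\<Sum>v\<in>?path. E v) * m"
    by (simp add: sum_distrib_left)
  also have "\<dots> = 4 * (real m)^2 * ((real k - 1) / real k)^2
                      * ((\<Sum>v\<in>?path. E v) / ((real k - 1) * real m))"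
    using k2 assms(3) by (simp add: field_simps power2_eq_square)
  also have "(\<Sum>v\<in>?path. E v) / ((real k - 1) * real m) = eps_sq t m lab P D r x y"
    using k k2 by (simp add: eps_sq_def E_def)
  finally show ?thesis .
qed

end
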